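(* Let $S$ be a finite generating subset of $\mathbb{Z}^k$. There exists a constant $C>0$ such that for every injective group homomorphism $\varphi:\mathbb{Z}^k\to\mathbb{Z}^k$ and every $x\in\mathbb{Z}^k$, $$\|x\|_S\le C\,\frac{(\max\{\|\varphi\|_S,\|\varphi(x)\|_S\})^k}{|\det(\varphi)|}.$$
   Context: $\|\cdot\|_S$ is word length with respect to $S$, $\|\varphi\|_S=\max_{s\in S}\|\varphi(s)\|_S$, and $\det(\varphi)$ is the determinant of the integer matrix representing $\varphi$. *)

theory Defs
  imports "HOL-Analysis.Analysis"
begin

text \<open>Since Z^k is abelian, a word in S \<union> S^-1 evaluates to
  a linear combination with integer coefficients; the word length is the minimal
  total absolute value of the coefficients.\<close>

definition generates :: "(int ^ 'k) set \<Rightarrow> bool" where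
  "generates S \<longleftrightarrow> (\<forall>x. \<exists>c :: int ^ 'k \<Rightarrow> int. x = (\<Sum>s\<in>S. c s *s s))"

definition word_length :: "(int ^ 'k) set \<Rightarrow> int ^ 'k \<Rightarrow> nat" where
  "word_length S x = (LEAST n. \<exists>c :: int ^ 'k \<Rightarrow> int.
      x = (\<Sum>s\<in>S. c s *s s) \<and> int n = (\<Sum>s\<in>S. \<bar>c s\<bar>))"

definition hom_norm :: "(int ^ 'k) set \<Rightarrow> (int ^ 'k \<Rightarrow> int ^ 'k) \<Rightarrow> nat" where
  "hom_norm S \<phi> = Max ((\<lambda>s. word_length S (\<phi> s)) ` S)"

definition is_group_hom :: "(int ^ 'k \<Rightarrow> int ^ 'k) \<Rightarrow> bool" where
  "is_group_hom \<phi> \<longleftrightarrow> (\<forall>x y. \<phi> (x + y) = \<phi> x + \<phi> y)"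

definition hom_matrix :: "(int ^ 'k \<Rightarrow> int ^ 'k) \<Rightarrow> int ^ 'k ^ 'k" where
  "hom_matrix \<phi> = (\<chi> i j. \<phi> (axis j 1) $ i)"

end

theory Submission
  imports Defs
begin

text \<open>Let \<open>A\<close> be the integer matrix of \<open>\<phi>\<close> and \<open>M = max {\<parallel>\<phi>\<parallel>\<^sub>S, \<parallel>\<phi>(x)\<parallel>\<^sub>S}\<close>.
  Word length bounds the coordinates linearly, and conversely, so the entries of \<open>A\<close>
  (the coordinates of \<open>\<phi>(e\<^sub>j)\<close>, with \<open>\<parallel>\<phi>(e\<^sub>j)\<parallel>\<^sub>S \<le> \<parallel>e\<^sub>j\<parallel>\<^sub>S \<parallel>\<phi>\<parallel>\<^sub>S\<close>) and the
  coordinates of \<open>A x = \<phi>(x)\<close> are all \<open>O(M)\<close>. By Cramer's rule \<open>x\<^sub>k det A\<close> is the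
  determinant of \<open>A\<close> with its \<open>k\<close>-th column replaced by \<open>A x\<close>, hence \<open>O(M\<^sup>k)\<close>
  by the Leibniz expansion. Finally \<open>det A \<noteq> 0\<close> because \<open>\<phi>\<close> is injective, and
  \<open>\<parallel>x\<parallel>\<^sub>S = O(\<Sum>\<^sub>k |x\<^sub>k|)\<close>.\<close>

subsection \<open>Integer matrices\<close>

text \<open>Cramer's rule and the kernel criterion for singular matrices are available only over
  fields, so integer matrices are embedded into \<open>\<rat>\<close>.\<close>

definition of_int_mat :: "int^'n^'m \<Rightarrow> 'a::ring_1^'n^'m" where
  "of_int_mat A = (\<chi> i j. of_int (A$i$j))"

definition of_int_vec :: "int^'n \<Rightarrow> 'a::ring_1^'n" where
  "of_int_vec x = (\<chi> i. of_int (x$i))"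

lemma det_of_int_mat: "det (of_int_mat A :: 'a::comm_ring_1^'n^'n) = of_int (det A)"
  unfolding det_def of_int_mat_def by simp

lemma of_int_mat_mult_vec: "of_int_mat A *v of_int_vec x = (of_int_vec (A *v x) :: 'a::ring_1^'m)"
  by (simp add: of_int_mat_def of_int_vec_def matrix_vector_mult_def vec_eq_iff)

lemma of_int_vec_eq_iff [simp]:
  "(of_int_vec x :: 'a::ring_char_0^'n) = of_int_vec y \<longleftrightarrow> x = y"
  by (simp add: of_int_vec_def vec_eq_iff)

lemma of_int_vec_0 [simp]: "of_int_vec 0 = 0"
  by (simp add: of_int_vec_def vec_eq_iff)

lemma cramer_lemma_int:
  fixes A :: "int^'n^'n"
  shows "det (\<chi> i j. if j = k then (A *v x)$i else A$i$j) = x$k * det A"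
proof -
  let ?Q = "of_int_mat A :: rat^'n^'n"
  have "(of_int (det (\<chi> i j. if j = k then (A *v x)$i else A$i$j)) :: rat)
      = det (of_int_mat (\<chi> i j. if j = k then (A *v x)$i else A$i$j) :: rat^'n^'n)"
    by (rule det_of_int_mat[symmetric])
  also have "of_int_mat (\<chi> i j. if j = k then (A *v x)$i else A$i$j)
      = (\<chi> i j. if j = k then (?Q *v of_int_vec x)$i else ?Q$i$j)"
    by (simp add: of_int_mat_def of_int_vec_def matrix_vector_mult_def vec_eq_iff)
  also have "det \<dots> = of_int_vec x $ k * det ?Q"
    by (rule cramer_lemma)
  also have "\<dots> = of_int (x$k * det A)"
    by (simp add: of_int_vec_def det_of_int_mat)
  finally show ?thesis
    by (simp only: of_int_eq_iff)
qed

lemma rat_vec_common_denominator: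
  fixes v :: "rat^'n"
  obtains d z where "d > 0" "of_int d *s v = of_int_vec z"
proof -
  define d where "d = (\<Prod>i\<in>UNIV. snd (quotient_of (v$i)))"
  have "d > 0"
    unfolding d_def by (simp add: prod_pos quotient_of_denom_pos')
  have "\<exists>a. of_int d * v$i = of_int a" for i
  proof -
    obtain p q where pq: "quotient_of (v$i) = (p, q)" by fastforce
    have "snd (quotient_of (v$i)) dvd d"
      unfolding d_def by (rule dvd_prodI) auto
    then obtain e where "d = q * e"
      using pq by auto
    moreover have "q > 0" "v$i = of_int p / of_int q"
      using pq by (auto intro: quotient_of_denom_pos quotient_of_div)
    ultimately have "of_int d * v$i = of_int (e * p)"
      by simp
    then show ?thesis ..
  qed
  then obtain a where "\<And>i. of_int d * v$i = of_int (a i)" by metis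
  then have "of_int d *s v = of_int_vec (\<chi> i. a i)"
    by (simp add: of_int_vec_def vec_eq_iff)
  with \<open>d > 0\<close> show thesis by (rule that)
qed

lemma det_nonzero_if_inj_int:
  fixes A :: "int^'n^'n"
  assumes "inj ((*v) A)"
  shows "det A \<noteq> 0"
proof
  let ?Q = "of_int_mat A :: rat^'n^'n"
  assume "det A = 0"
  then have "\<not> invertible ?Q"
    by (simp add: invertible_det_nz det_of_int_mat)
  then obtain v where "?Q *v v = 0" "v \<noteq> 0"
    using matrix_left_invertible_ker invertible_left_inverse by blast
  obtain d z where "d > 0" "of_int d *s v = of_int_vec z"
    by (rule rat_vec_common_denominator)
  have "z \<noteq> 0"
  proof
    assume "z = 0"
    then have "of_int d *s v = 0"
      using \<open>of_int d *s v = of_int_vec z\<close> by (simp add: of_int_vec_def vec_eq_iff)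
    with \<open>d > 0\<close> \<open>v \<noteq> 0\<close> show False
      by (auto simp: vec_eq_iff)
  qed
  have "of_int_vec (A *v z) = ?Q *v (of_int d *s v)"
    unfolding \<open>of_int d *s v = of_int_vec z\<close> by (rule of_int_mat_mult_vec[symmetric])
  also have "\<dots> = 0"
    by (simp add: vector_scalar_commute \<open>?Q *v v = 0\<close>)
  finally have "of_int_vec (A *v z) = (of_int_vec (A *v 0) :: rat^'n)"
    by (simp only: matrix_vector_mult_0_right of_int_vec_0)
  then have "A *v z = A *v 0"
    by (simp only: of_int_vec_eq_iff)
  then have "z = 0"
    using assms unfolding inj_def by blast
  with \<open>z \<noteq> 0\<close> show False
    by simp
qed

lemma abs_det_le:
  fixes B :: "'a::linordered_idom^'n^'n"
  assumes "\<And>i j. \<bar>B$i$j\<bar> \<le> R"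
  shows "\<bar>det B\<bar> \<le> fact CARD('n) * R ^ CARD('n)"
proof -
  have "\<bar>det B\<bar> \<le> (\<Sum>p | p permutes (UNIV::'n set). \<Prod>i\<in>UNIV. \<bar>B$i$p i\<bar>)"
    unfolding det_def
    by (rule order_trans[OF sum_abs sum_mono]) (simp add: abs_mult abs_prod sign_def)
  also have "\<dots> \<le> (\<Sum>p | p permutes (UNIV::'n set). \<Prod>i\<in>(UNIV::'n set). R)"
  proof (rule sum_mono)
    show "(\<Prod>i\<in>UNIV. \<bar>B$i$p i\<bar>) \<le> (\<Prod>i\<in>(UNIV::'n set). R)" for p
      by (rule prod_mono) (use assms in auto)
  qed
  also have "\<dots> = fact CARD('n) * R ^ CARD('n)"
    by (simp add: card_permutations)
  finally show ?thesis .
qed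

subsection \<open>Additive maps and word length\<close>

text \<open>The qualifier is needed: HOL-Analysis also has a measure-theoretic \<open>additive\<close>.\<close>

lemma is_group_hom_iff_additive: "is_group_hom \<phi> \<longleftrightarrow> Modules.additive \<phi>"
  unfolding is_group_hom_def Modules.additive_def ..

lemma additive_int_scale:
  fixes f :: "int^'n \<Rightarrow> int^'m"
  assumes "Modules.additive f"
  shows "f (c *s x) = c *s f x"
proof (induction c rule: int_induct[where k = 0])
  case base
  then show ?case
    using additive.zero[OF assms] by simp
next
  case (step1 c)
  then show ?case
    using additive.add[OF assms, of "c *s x" x] by (simp add: vector_sadd_rdistrib)
next
  case (step2 c)
  then show ?case
    using additive.diff[OF assms, of "c *s x" x] by (simp add: vector_sub_rdistrib)
qed

lemma additive_int_combination:
  fixes f :: "int^'n \<Rightarrow> int^'m"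
  assumes "Modules.additive f"
  shows "f (\<Sum>s\<in>A. c s *s g s) = (\<Sum>s\<in>A. c s *s f (g s))"
  by (simp add: additive.sum[OF assms] additive_int_scale[OF assms])

lemma hom_matrix_mult_vec:
  assumes "is_group_hom \<phi>"
  shows "hom_matrix \<phi> *v x = \<phi> x"
proof -
  have "\<phi> x = (\<Sum>j\<in>UNIV. x$j *s \<phi> (axis j 1))"
    using additive_int_combination[where f = \<phi> and A = UNIV and c = "\<lambda>j. x$j" and g = "\<lambda>j. axis j 1"] assms
    by (simp add: is_group_hom_iff_additive basis_expansion)
  then show ?thesis
    by (simp add: vec_eq_iff hom_matrix_def matrix_vector_mult_def mult.commute)
qed

lemma det_hom_matrix_nonzero:
  assumes "is_group_hom \<phi>" "inj \<phi>"
  shows "det (hom_matrix \<phi>) \<noteq> 0"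
proof -
  have "(*v) (hom_matrix \<phi>) = \<phi>"
    using assms(1) by (simp add: fun_eq_iff hom_matrix_mult_vec)
  with assms(2) show ?thesis
    by (intro det_nonzero_if_inj_int) simp
qed

lemma word_length_le:
  assumes "x = (\<Sum>s\<in>S. c s *s s)"
  shows "int (word_length S x) \<le> (\<Sum>s\<in>S. \<bar>c s\<bar>)"
proof -
  have "word_length S x \<le> nat (\<Sum>s\<in>S. \<bar>c s\<bar>)"
    unfolding word_length_def using assms
    by (intro Least_le exI[of _ c]) (simp add: sum_nonneg)
  then show ?thesis
    by (simp add: le_nat_iff sum_nonneg)
qed

lemma word_length_attained:
  assumes "generates S"
  obtains c where "x = (\<Sum>s\<in>S. c s *s s)" "int (word_length S x) = (\<Sum>s\<in>S. \<bar>c s\<bar>)"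
proof -
  obtain c where "x = (\<Sum>s\<in>S. c s *s s)"
    using assms unfolding generates_def by blast
  let ?P = "\<lambda>n. \<exists>c. x = (\<Sum>s\<in>S. c s *s s) \<and> int n = (\<Sum>s\<in>S. \<bar>c s\<bar>)"
  have "?P (nat (\<Sum>s\<in>S. \<bar>c s\<bar>))"
    using \<open>x = _\<close> by (intro exI[of _ c]) (simp add: sum_nonneg)
  then have "?P (LEAST n. ?P n)"
    by (rule LeastI)
  then have "\<exists>c. x = (\<Sum>s\<in>S. c s *s s) \<and> int (word_length S x) = (\<Sum>s\<in>S. \<bar>c s\<bar>)"
    unfolding word_length_def .
  with that show thesis
    by blast
qed

lemma word_length_0 [simp]: "word_length S 0 = 0"
  using word_length_le[where x = 0 and S = S and c = "\<lambda>_. 0"] by simp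

lemma word_length_add_le:
  assumes "generates S"
  shows "word_length S (x + y) \<le> word_length S x + word_length S y"
proof -
  obtain c where c: "x = (\<Sum>s\<in>S. c s *s s)" "int (word_length S x) = (\<Sum>s\<in>S. \<bar>c s\<bar>)"
    using word_length_attained[OF assms] by blast
  obtain d where d: "y = (\<Sum>s\<in>S. d s *s s)" "int (word_length S y) = (\<Sum>s\<in>S. \<bar>d s\<bar>)"
    using word_length_attained[OF assms] by blast
  have "x + y = (\<Sum>s\<in>S. (c s + d s) *s s)"
    using c(1) d(1) by (simp add: vector_sadd_rdistrib sum.distrib)
  then have "int (word_length S (x + y)) \<le> (\<Sum>s\<in>S. \<bar>c s + d s\<bar>)"
    by (rule word_length_le)
  also have "\<dots> \<le> (\<Sum>s\<in>S. \<bar>c s\<bar>) + (\<Sum>s\<in>S. \<bar>d s\<bar>)"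
    by (simp add: sum.distrib[symmetric] sum_mono abs_triangle_ineq)
  finally show ?thesis
    using c(2) d(2) by linarith
qed

lemma word_length_scale_le:
  assumes "generates S"
  shows "int (word_length S (a *s x)) \<le> \<bar>a\<bar> * int (word_length S x)"
proof -
  obtain c where c: "x = (\<Sum>s\<in>S. c s *s s)" "int (word_length S x) = (\<Sum>s\<in>S. \<bar>c s\<bar>)"
    using word_length_attained[OF assms] by blast
  then have "a *s x = (\<Sum>s\<in>S. (a * c s) *s s)"
    by (simp add: vec_eq_iff sum_distrib_left mult.assoc)
  then have "int (word_length S (a *s x)) \<le> (\<Sum>s\<in>S. \<bar>a * c s\<bar>)"
    by (rule word_length_le)
  then show ?thesis
    by (simp add: c(2) abs_mult sum_distrib_left)
qed

lemma word_length_sum_le: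
  assumes "generates S"
  shows "word_length S (sum f A) \<le> (\<Sum>i\<in>A. word_length S (f i))"
proof (induction A rule: infinite_finite_induct)
  case (insert i A)
  then show ?case
    using word_length_add_le[OF assms, of "f i" "sum f A"] by simp
qed simp_all

lemma word_length_le_coordinates:
  assumes "generates S"
  shows "int (word_length S x) \<le> (\<Sum>j\<in>UNIV. \<bar>x$j\<bar> * int (word_length S (axis j 1)))"
proof -
  have "word_length S x \<le> (\<Sum>j\<in>UNIV. word_length S (x$j *s axis j 1))"
    using word_length_sum_le[OF assms, of "\<lambda>j. x$j *s axis j 1" UNIV]
    by (simp add: basis_expansion)
  then have "int (word_length S x) \<le> (\<Sum>j\<in>UNIV. int (word_length S (x$j *s axis j 1)))"
    by (simp only: of_nat_sum[symmetric] of_nat_le_iff)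
  also have "\<dots> \<le> (\<Sum>j\<in>UNIV. \<bar>x$j\<bar> * int (word_length S (axis j 1)))"
    by (intro sum_mono word_length_scale_le[OF assms])
  finally show ?thesis .
qed

lemma hom_norm_ge:
  assumes "finite S" "s \<in> S"
  shows "word_length S (\<phi> s) \<le> hom_norm S \<phi>"
  unfolding hom_norm_def using assms by simp

lemma word_length_hom_le:
  assumes "finite S" "generates S" "is_group_hom \<phi>"
  shows "word_length S (\<phi> x) \<le> word_length S x * hom_norm S \<phi>"
proof -
  obtain c where c: "x = (\<Sum>s\<in>S. c s *s s)" "int (word_length S x) = (\<Sum>s\<in>S. \<bar>c s\<bar>)"
    using word_length_attained[OF assms(2)] by blast
  have "\<phi> x = (\<Sum>s\<in>S. c s *s \<phi> s)"
    using assms(3) c(1)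
    by (simp add: is_group_hom_iff_additive additive_int_combination[where g = "\<lambda>s. s"])
  then have "int (word_length S (\<phi> x)) \<le> (\<Sum>s\<in>S. int (word_length S (c s *s \<phi> s)))"
    using word_length_sum_le[OF assms(2)] by (simp only: of_nat_sum[symmetric] of_nat_le_iff)
  also have "\<dots> \<le> (\<Sum>s\<in>S. \<bar>c s\<bar> * int (hom_norm S \<phi>))"
  proof (rule sum_mono)
    fix s assume "s \<in> S"
    have "int (word_length S (c s *s \<phi> s)) \<le> \<bar>c s\<bar> * int (word_length S (\<phi> s))"
      by (rule word_length_scale_le[OF assms(2)])
    also have "\<dots> \<le> \<bar>c s\<bar> * int (hom_norm S \<phi>)"
      using hom_norm_ge[OF assms(1) \<open>s \<in> S\<close>] by (simp add: mult_left_mono)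
    finally show "int (word_length S (c s *s \<phi> s)) \<le> \<bar>c s\<bar> * int (hom_norm S \<phi>)" .
  qed
  also have "\<dots> = int (word_length S x * hom_norm S \<phi>)"
    by (simp add: c(2) sum_distrib_right)
  finally show ?thesis
    by linarith
qed

lemma abs_component_le_word_length:
  assumes "generates S" "\<And>s. s \<in> S \<Longrightarrow> \<bar>s$i\<bar> \<le> b"
  shows "\<bar>x$i\<bar> \<le> int (word_length S x) * b"
proof -
  obtain c where c: "x = (\<Sum>s\<in>S. c s *s s)" "int (word_length S x) = (\<Sum>s\<in>S. \<bar>c s\<bar>)"
    using word_length_attained[OF assms(1)] by blast
  have "\<bar>x$i\<bar> = \<bar>\<Sum>s\<in>S. c s * s$i\<bar>"
    using c(1) by simp
  also have "\<dots> \<le> (\<Sum>s\<in>S. \<bar>c s\<bar> * b)"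
    by (rule order_trans[OF sum_abs sum_mono]) (simp add: abs_mult assms(2) mult_left_mono)
  finally show ?thesis
    by (simp add: c(2) sum_distrib_right)
qed

lemma vec_set_components_bounded:
  fixes S :: "('a::linordered_idom^'n) set"
  assumes "finite S"
  obtains b where "0 \<le> b" "\<And>s i. s \<in> S \<Longrightarrow> \<bar>s$i\<bar> \<le> b"
proof
  let ?b = "Max (insert 0 ((\<lambda>(s, i). \<bar>s$i\<bar>) ` (S \<times> UNIV)))"
  show "0 \<le> ?b"
    using assms by simp
  show "\<bar>s$i\<bar> \<le> ?b" if "s \<in> S" for s i
    using assms that by (intro Max_ge) force+
qed

lemma abs_hom_matrix_le:
  assumes "finite S" "generates S" "is_group_hom \<phi>"
    and "0 \<le> b" "\<And>s i. s \<in> S \<Longrightarrow> \<bar>s$i\<bar> \<le> b"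
  shows "\<bar>hom_matrix \<phi> $ i $ j\<bar> \<le> int (word_length S (axis j 1)) * int (hom_norm S \<phi>) * b"
proof -
  have "\<bar>hom_matrix \<phi> $ i $ j\<bar> = \<bar>\<phi> (axis j 1) $ i\<bar>"
    by (simp add: hom_matrix_def)
  also have "\<dots> \<le> int (word_length S (\<phi> (axis j 1))) * b"
    using assms(2,5) by (rule abs_component_le_word_length)
  also have "\<dots> \<le> int (word_length S (axis j 1)) * int (hom_norm S \<phi>) * b"
    using word_length_hom_le[OF assms(1-3), of "axis j 1"] \<open>0 \<le> b\<close>
    by (intro mult_right_mono) (simp_all flip: of_nat_mult)
  finally show ?thesis .
qed

lemma abs_coordinate_mult_abs_det_le:
  fixes A :: "int^'n^'n"
  assumes "\<And>i j. \<bar>A$i$j\<bar> \<le> R" "\<And>i. \<bar>(A *v x)$i\<bar> \<le> R"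
  shows "\<bar>x$k\<bar> * \<bar>det A\<bar> \<le> fact CARD('n) * R ^ CARD('n)"
proof -
  have "\<bar>x$k\<bar> * \<bar>det A\<bar> = \<bar>det (\<chi> i j. if j = k then (A *v x)$i else A$i$j)\<bar>"
    by (simp add: cramer_lemma_int abs_mult)
  also have "\<dots> \<le> fact CARD('n) * R ^ CARD('n)"
    by (rule abs_det_le) (simp add: assms)
  finally show ?thesis .
qed

lemma word_length_mult_abs_det_le:
  fixes S :: "(int^'k) set" and x :: "int^'k"
  assumes "finite S" "generates S" "is_group_hom \<phi>"
    and b: "0 \<le> b" "\<And>s i. s \<in> S \<Longrightarrow> \<bar>s$i\<bar> \<le> b"
    and L: "\<And>j. int (word_length S (axis j 1)) \<le> L"
  defines "(M::int) \<equiv> int (max (hom_norm S \<phi>) (word_length S (\<phi> x)))"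
  shows "int (word_length S x) * \<bar>det (hom_matrix \<phi>)\<bar>
    \<le> int CARD('k) * L * fact CARD('k) * ((L + 1) * b * M) ^ CARD('k)"
proof -
  \<comment> \<open>Entries of the matrix are at most \<open>L M b\<close>, coordinates of \<open>\<phi> x\<close> at most \<open>M b\<close>.\<close>
  define R where "R = (L + 1) * b * M"
  have "0 \<le> L"
    using of_nat_0_le_iff L by (rule order_trans)
  have "0 \<le> M"
    by (simp add: M_def)
  have "\<bar>hom_matrix \<phi> $ i $ j\<bar> \<le> R" for i j
  proof -
    have "\<bar>hom_matrix \<phi> $ i $ j\<bar> \<le> int (word_length S (axis j 1)) * int (hom_norm S \<phi>) * b"
      using assms(1-3) b by (rule abs_hom_matrix_le)
    also have "\<dots> \<le> (L + 1) * M * b"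
      using L[of j] b(1) \<open>0 \<le> L\<close> by (intro mult_right_mono mult_mono) (auto simp: M_def)
    finally show ?thesis
      by (simp add: R_def ac_simps)
  qed
  moreover have "\<bar>(hom_matrix \<phi> *v x) $ i\<bar> \<le> R" for i
  proof -
    have "\<bar>\<phi> x $ i\<bar> \<le> int (word_length S (\<phi> x)) * b"
      using assms(2) b(2) by (rule abs_component_le_word_length)
    also have "\<dots> \<le> M * b"
      using b(1) by (intro mult_right_mono) (simp_all add: M_def)
    also have "\<dots> \<le> (L + 1) * M * b"
      using b(1) \<open>0 \<le> L\<close> \<open>0 \<le> M\<close> by (intro mult_right_mono) (simp_all add: algebra_simps)
    finally show ?thesis
      by (simp add: R_def ac_simps hom_matrix_mult_vec[OF assms(3)])
  qed
  ultimately have det: "\<bar>x$j\<bar> * \<bar>det (hom_matrix \<phi>)\<bar> \<le> fact CARD('k) * R ^ CARD('k)" for j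
    by (rule abs_coordinate_mult_abs_det_le)
  have "int (word_length S x) * \<bar>det (hom_matrix \<phi>)\<bar>
      \<le> (\<Sum>j\<in>UNIV. \<bar>x$j\<bar> * int (word_length S (axis j 1))) * \<bar>det (hom_matrix \<phi>)\<bar>"
    using word_length_le_coordinates[OF assms(2)] by (rule mult_right_mono) simp
  also have "\<dots> \<le> (\<Sum>j\<in>UNIV. L * (\<bar>x$j\<bar> * \<bar>det (hom_matrix \<phi>)\<bar>))"
    unfolding sum_distrib_right
  proof (rule sum_mono)
    fix j
    have "int (word_length S (axis j 1)) * (\<bar>x$j\<bar> * \<bar>det (hom_matrix \<phi>)\<bar>)
        \<le> L * (\<bar>x$j\<bar> * \<bar>det (hom_matrix \<phi>)\<bar>)"
      by (rule mult_right_mono[OF L]) simp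
    then show "\<bar>x$j\<bar> * int (word_length S (axis j 1)) * \<bar>det (hom_matrix \<phi>)\<bar>
        \<le> L * (\<bar>x$j\<bar> * \<bar>det (hom_matrix \<phi>)\<bar>)"
      by (simp add: ac_simps)
  qed
  also have "\<dots> \<le> (\<Sum>j\<in>(UNIV::'k set). L * (fact CARD('k) * R ^ CARD('k)))"
    using det \<open>0 \<le> L\<close> by (intro sum_mono mult_left_mono)
  finally show ?thesis
    by (simp add: R_def)
qed

lemma word_length_mult_abs_det_bounded:
  fixes S :: "(int^'k) set"
  assumes "finite S" "generates S"
  obtains C :: int where "0 \<le> C"
    "\<And>\<phi> x. is_group_hom \<phi> \<Longrightarrow> int (word_length S x) * \<bar>det (hom_matrix \<phi>)\<bar>
       \<le> C * int (max (hom_norm S \<phi>) (word_length S (\<phi> x))) ^ CARD('k)"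
proof -
  obtain b where b: "0 \<le> b" "\<And>s i. s \<in> S \<Longrightarrow> \<bar>s$i\<bar> \<le> b"
    using vec_set_components_bounded[OF assms(1)] by blast
  define L where "L = (\<Sum>j\<in>UNIV. int (word_length S (axis j 1 :: int^'k)))"
  have L: "int (word_length S (axis j 1)) \<le> L" for j
    unfolding L_def by (rule member_le_sum) auto
  show thesis
  proof
    show "0 \<le> int CARD('k) * L * fact CARD('k) * ((L + 1) * b) ^ CARD('k)"
      by (simp add: L_def b(1) sum_nonneg)
    show "int (word_length S x) * \<bar>det (hom_matrix \<phi>)\<bar>
        \<le> int CARD('k) * L * fact CARD('k) * ((L + 1) * b) ^ CARD('k)
          * int (max (hom_norm S \<phi>) (word_length S (\<phi> x))) ^ CARD('k)"
      if "is_group_hom \<phi>" for \<phi> x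
      using word_length_mult_abs_det_le[OF assms that b L, of x]
      by (simp add: power_mult_distrib ac_simps)
  qed
qed

theorem mainTheorem10:
  fixes S :: "(int ^ 'k) set"
  assumes "finite S" and "generates S"
  shows "\<exists>C > (0::real). \<forall>\<phi> :: int ^ 'k \<Rightarrow> int ^ 'k. is_group_hom \<phi> \<and> inj \<phi> \<longrightarrow>
           (\<forall>x. real (word_length S x) \<le>
              C * real (max (hom_norm S \<phi>) (word_length S (\<phi> x))) ^ CARD('k)
                / \<bar>real_of_int (det (hom_matrix \<phi>))\<bar>)"
proof -
  obtain C :: int where "0 \<le> C" and C: "\<And>\<phi> x. is_group_hom \<phi> \<Longrightarrow>
      int (word_length S x) * \<bar>det (hom_matrix \<phi>)\<bar>
        \<le> C * int (max (hom_norm S \<phi>) (word_length S (\<phi> x))) ^ CARD('k)"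
    using word_length_mult_abs_det_bounded[OF assms] by blast
  show ?thesis
  proof (intro exI[of _ "real_of_int C + 1"] conjI allI impI)
    show "real_of_int C + 1 > 0"
      using \<open>0 \<le> C\<close> by simp
    fix \<phi> :: "int^'k \<Rightarrow> int^'k" and x
    assume \<phi>: "is_group_hom \<phi> \<and> inj \<phi>"
    let ?M = "real (max (hom_norm S \<phi>) (word_length S (\<phi> x))) ^ CARD('k)"
    let ?d = "\<bar>real_of_int (det (hom_matrix \<phi>))\<bar>"
    have "real_of_int (int (word_length S x) * \<bar>det (hom_matrix \<phi>)\<bar>)
        \<le> real_of_int (C * int (max (hom_norm S \<phi>) (word_length S (\<phi> x))) ^ CARD('k))"
      using C[of \<phi> x] \<phi> by (simp only: of_int_le_iff)
    then have "real (word_length S x) * ?d \<le> real_of_int C * ?M"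
      by simp
    also have "\<dots> \<le> (real_of_int C + 1) * ?M"
      by (intro mult_right_mono) simp_all
    moreover have "0 < ?d"
      using det_hom_matrix_nonzero \<phi> by auto
    ultimately show "real (word_length S x) \<le> (real_of_int C + 1) * ?M / ?d"
      by (simp only: pos_le_divide_eq)
  qed
qed

end
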